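(* Let $G$ be a LEF-group, $R$ a ring, $A$ an $R$-module, and $\sigma,\tau\in CA_{R\text{-mod}}(G,A)$. (1) If $A$ is a Noetherian $R$-module and $\tau$ is reversible, then $\tau^{-1}\in CA_{R\text{-mod}}(G,A)$. (2) If $\sigma\circ\tau=\mathrm{Id}$, then $\tau\circ\sigma=\mathrm{Id}$ in each of the following cases: (a) $A$ is a Noetherian $R$-module or an Artinian $R$-module; (b) $R$ is commutative and $A$ is a finitely generated $R$-module.
   Context: A group $G$ is LEF if every finite subset $S\subset G$ admits an injective map $\varphi\colon S\to H$ into some finite group $H$ with $\varphi(ab)=\varphi(a)\varphi(b)$ whenever $a,b,ab\in S$. $G$ acts on $A^G$ by $(gc)(h)=c(g^{-1}h)$; a cellular automaton is a map $\tau\colon A^G\to A^G$ with $(\tau(c))(g)=\mu((g^{-1}c)|_M)$ for some finite $M\subset G$ and map $\mu\colon A^M\to A$; it is reversible if it is bijective and its inverse is a cellular automaton. $CA_{R\text{-mod}}(G,A)$ is the set of cellular automata $\tau\colon A^G\to A^G$ admitting, for some finite memory set $M\subset G$, a local defining map $\mu\colon A^M\to A$ which is a homomorphism of $R$-modules. *)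

theory Defs
  imports "HOL-Algebra.Group"
begin

text \<open>The group G is a type of class group_add (operation written +, not necessarily
commutative; inverse is uminus).
A is a type of class ab_group_add together with a scalar multiplication by the
unital ring 'r (class ring_1, not necessarily commutative).\<close>

definition LEF :: "'g::group_add itself \<Rightarrow> bool" where
  "LEF _ \<longleftrightarrow> (\<forall>S::'g set. finite S \<longrightarrow>
     (\<exists>(H::nat monoid) (\<phi>::'g \<Rightarrow> nat). group H \<and> finite (carrier H) \<and>
        \<phi> ` S \<subseteq> carrier H \<and> inj_on \<phi> S \<and>
        (\<forall>a\<in>S. \<forall>b\<in>S. a + b \<in> S \<longrightarrow> \<phi> (a + b) = \<phi> a \<otimes>\<^bsub>H\<^esub> \<phi> b)))"

definition shift :: "'g::group_add \<Rightarrow> ('g \<Rightarrow> 'a) \<Rightarrow> ('g \<Rightarrow> 'a)" where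
  "shift g c = (\<lambda>h. c (- g + h))"

text \<open>Elements of A^M are represented as functions 'g => 'a vanishing outside M.\<close>
definition restr :: "'g set \<Rightarrow> ('g \<Rightarrow> 'a::zero) \<Rightarrow> ('g \<Rightarrow> 'a)" where
  "restr M c = (\<lambda>h. if h \<in> M then c h else 0)"

definition supported_in :: "'g set \<Rightarrow> ('g \<Rightarrow> 'a::zero) \<Rightarrow> bool" where
  "supported_in M x \<longleftrightarrow> (\<forall>h. h \<notin> M \<longrightarrow> x h = 0)"

definition is_CA :: "(('g::group_add \<Rightarrow> 'a::zero) \<Rightarrow> ('g \<Rightarrow> 'a)) \<Rightarrow> bool" where
  "is_CA \<tau> \<longleftrightarrow> (\<exists>M (\<mu>::('g \<Rightarrow> 'a) \<Rightarrow> 'a). finite M \<and>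
      (\<forall>c g. \<tau> c g = \<mu> (restr M (shift (- g) c))))"

definition reversible :: "(('g::group_add \<Rightarrow> 'a::zero) \<Rightarrow> ('g \<Rightarrow> 'a)) \<Rightarrow> bool" where
  "reversible \<tau> \<longleftrightarrow> is_CA \<tau> \<and> bij \<tau> \<and> is_CA (inv_into UNIV \<tau>)"

definition rmodule :: "('r::ring_1 \<Rightarrow> 'a::ab_group_add \<Rightarrow> 'a) \<Rightarrow> bool" where
  "rmodule smul \<longleftrightarrow>
     (\<forall>r x y. smul r (x + y) = smul r x + smul r y) \<and>
     (\<forall>r s x. smul (r + s) x = smul r x + smul s x) \<and>
     (\<forall>r s x. smul (r * s) x = smul r (smul s x)) \<and>
     (\<forall>x. smul 1 x = x)"

definition CA_Rmod :: "('r::ring_1 \<Rightarrow> 'a::ab_group_add \<Rightarrow> 'a) \<Rightarrow>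
    (('g::group_add \<Rightarrow> 'a) \<Rightarrow> ('g \<Rightarrow> 'a)) \<Rightarrow> bool" where
  "CA_Rmod smul \<tau> \<longleftrightarrow> (\<exists>M (\<mu>::('g \<Rightarrow> 'a) \<Rightarrow> 'a). finite M \<and>
      (\<forall>c g. \<tau> c g = \<mu> (restr M (shift (- g) c))) \<and>
      (\<forall>x y. supported_in M x \<longrightarrow> supported_in M y \<longrightarrow>
          \<mu> (\<lambda>h. x h + y h) = \<mu> x + \<mu> y) \<and>
      (\<forall>r x. supported_in M x \<longrightarrow> \<mu> (\<lambda>h. smul r (x h)) = smul r (\<mu> x)))"

definition submodule :: "('r::ring_1 \<Rightarrow> 'a::ab_group_add \<Rightarrow> 'a) \<Rightarrow> 'a set \<Rightarrow> bool" where
  "submodule smul N \<longleftrightarrow> 0 \<in> N \<and> (\<forall>x\<in>N. \<forall>y\<in>N. x + y \<in> N) \<and>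
     (\<forall>r. \<forall>x\<in>N. smul r x \<in> N)"

definition noetherian_module :: "('r::ring_1 \<Rightarrow> 'a::ab_group_add \<Rightarrow> 'a) \<Rightarrow> bool" where
  "noetherian_module smul \<longleftrightarrow> (\<forall>N :: nat \<Rightarrow> 'a set.
     (\<forall>n. submodule smul (N n)) \<and> (\<forall>n. N n \<subseteq> N (Suc n)) \<longrightarrow>
     (\<exists>m. \<forall>n\<ge>m. N n = N m))"

definition artinian_module :: "('r::ring_1 \<Rightarrow> 'a::ab_group_add \<Rightarrow> 'a) \<Rightarrow> bool" where
  "artinian_module smul \<longleftrightarrow> (\<forall>N :: nat \<Rightarrow> 'a set.
     (\<forall>n. submodule smul (N n)) \<and> (\<forall>n. N (Suc n) \<subseteq> N n) \<longrightarrow>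
     (\<exists>m. \<forall>n\<ge>m. N n = N m))"

definition mspan :: "('r::ring_1 \<Rightarrow> 'a::ab_group_add \<Rightarrow> 'a) \<Rightarrow> 'a set \<Rightarrow> 'a set" where
  "mspan smul S = \<Inter>{N. submodule smul N \<and> S \<subseteq> N}"

definition fin_gen_module :: "('r::ring_1 \<Rightarrow> 'a::ab_group_add \<Rightarrow> 'a) \<Rightarrow> bool" where
  "fin_gen_module smul \<longleftrightarrow> (\<exists>S. finite S \<and> mspan smul S = UNIV)"

end

theory Submission
  imports Defs "HOL-Library.Function_Algebras"
begin

text \<open>Part (1): the inverse of an R-linear bijection is R-linear, so the local rule of the
  inverse automaton (the inverse read at the origin) is R-linear.

  Part (2): by the LEF property the finitely many elements involved in the memory sets of
  \<sigma> and \<tau> embed into a finite group H compatibly with the group law. The local rules of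
  \<sigma> and \<tau> therefore define automata \<sigma>_H and \<tau>_H on A^H with \<sigma>_H \<circ> \<tau>_H = id. As a finite
  direct sum of copies of A, the module A^H is again Noetherian, Artinian, or finitely generated
  over the commutative ring R, and in each case its endomorphism ring is directly finite:
  Noetherian modules and finitely generated modules over commutative rings are Hopfian (the
  latter by a Nakayama-type argument with the operators p(g)), Artinian modules are co-Hopfian.
  Hence \<tau>_H \<circ> \<sigma>_H = id; reading this at the identity of H and using shift equivariance
  gives \<tau> \<circ> \<sigma> = id.\<close>

lemma rmoduleD:
  assumes "rmodule sm"
  shows "sm r (x + y) = sm r x + sm r y" "sm (r + s) x = sm r x + sm s x"
    "sm (r * s) x = sm r (sm s x)" "sm 1 x = x"
  using assms unfolding rmodule_def by auto

lemma rmodule_smul_zero: "rmodule sm \<Longrightarrow> sm r 0 = 0"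
  by (metis add_cancel_right_left rmoduleD(1))

lemma rmodule_zero_smul: "rmodule sm \<Longrightarrow> sm 0 x = 0"
  by (metis add_cancel_right_left rmoduleD(2))

lemma rmodule_minus_one_smul:
  assumes "rmodule sm"
  shows "sm (-1) x = - x"
proof -
  have "x + sm (-1) x = sm (1 + -1) x"
    using rmoduleD(2,4)[OF assms] by metis
  then have "x + sm (-1) x = 0"
    using rmodule_zero_smul[OF assms] by simp
  then show ?thesis by (simp add: eq_neg_iff_add_eq_0 add.commute)
qed

lemma submodule_zero: "submodule sm N \<Longrightarrow> 0 \<in> N"
  unfolding submodule_def by blast

lemma submodule_add: "submodule sm N \<Longrightarrow> x \<in> N \<Longrightarrow> y \<in> N \<Longrightarrow> x + y \<in> N"
  unfolding submodule_def by blast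

lemma submodule_smul: "submodule sm N \<Longrightarrow> x \<in> N \<Longrightarrow> sm r x \<in> N"
  unfolding submodule_def by blast

lemma submodule_diff:
  assumes "rmodule sm" "submodule sm N" "x \<in> N" "y \<in> N"
  shows "x - y \<in> N"
  using submodule_add[OF assms(2,3) submodule_smul[OF assms(2,4), of "-1"]]
  by (simp add: rmodule_minus_one_smul[OF assms(1)])

lemma submodule_Int: "submodule sm A \<Longrightarrow> submodule sm B \<Longrightarrow> submodule sm (A \<inter> B)"
  unfolding submodule_def by auto

lemma submodule_mspan: "submodule sm (mspan sm S)"
  unfolding submodule_def mspan_def by auto

lemma mspan_least: "submodule sm N \<Longrightarrow> S \<subseteq> N \<Longrightarrow> mspan sm S \<subseteq> N"
  unfolding mspan_def by blast

lemma mspan_superset: "S \<subseteq> mspan sm S"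
  unfolding mspan_def by blast

definition module_endo :: "('r::ring_1 \<Rightarrow> 'v::ab_group_add \<Rightarrow> 'v) \<Rightarrow> ('v \<Rightarrow> 'v) \<Rightarrow> bool" where
  "module_endo sm f \<longleftrightarrow> (\<forall>x y. f (x + y) = f x + f y) \<and> (\<forall>r x. f (sm r x) = sm r (f x))"

lemma module_endo_add: "module_endo sm f \<Longrightarrow> f (x + y) = f x + f y"
  unfolding module_endo_def by blast

lemma module_endo_smul: "module_endo sm f \<Longrightarrow> f (sm r x) = sm r (f x)"
  unfolding module_endo_def by blast

lemma module_endo_zero: "module_endo sm f \<Longrightarrow> f 0 = 0"
  using module_endo_add[of sm f 0 0] by simp

lemma module_endo_diff: "module_endo sm f \<Longrightarrow> f (x - y) = f x - f y"
  using module_endo_add[of sm f "x - y" y] by (simp add: algebra_simps)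

lemma module_endo_comp: "module_endo sm f \<Longrightarrow> module_endo sm g \<Longrightarrow> module_endo sm (f \<circ> g)"
  unfolding module_endo_def by simp

lemma module_endo_funpow: "module_endo sm f \<Longrightarrow> module_endo sm (f ^^ n)"
  by (induction n) (auto simp: module_endo_def)

lemma submodule_image:
  assumes V: "submodule sm V" and f: "module_endo sm f"
  shows "submodule sm (f ` V)"
  unfolding submodule_def
proof (intro conjI ballI allI)
  show "0 \<in> f ` V"
    using submodule_zero[OF V] module_endo_zero[OF f] by (metis image_eqI)
next
  fix u v assume "u \<in> f ` V" "v \<in> f ` V"
  then obtain x y where "x \<in> V" "y \<in> V" "u = f x" "v = f y" by blast
  then show "u + v \<in> f ` V"
    using submodule_add[OF V] module_endo_add[OF f, of x y] by (metis image_eqI)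
next
  fix r u assume "u \<in> f ` V"
  then obtain x where "x \<in> V" "u = f x" by blast
  then show "sm r u \<in> f ` V"
    using submodule_smul[OF V] module_endo_smul[OF f, of r x] by (metis image_eqI)
qed

lemma submodule_kernel:
  assumes "rmodule sm" "submodule sm V" "module_endo sm f"
  shows "submodule sm {x \<in> V. f x = 0}"
  using assms module_endo_zero[OF assms(3)] rmodule_smul_zero[OF assms(1)]
  unfolding submodule_def by (auto simp: module_endo_add[OF assms(3)] module_endo_smul[OF assms(3)])

lemma funpow_image_eq:
  assumes "f ` V = V"
  shows "(f ^^ n) ` V = V"
proof (induction n)
  case (Suc n)
  have "(f ^^ Suc n) ` V = f ` (f ^^ n) ` V"
    by (simp add: image_comp)
  then show ?case using Suc assms by simp
qed simp

lemma funpow_image_subset: "f ` V \<subseteq> V \<Longrightarrow> (f ^^ n) ` V \<subseteq> V"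
  by (induction n) (auto simp: image_subset_iff)

lemma inj_on_funpow:
  assumes "inj_on f V" "f ` V \<subseteq> V"
  shows "inj_on (f ^^ n) V"
proof (induction n)
  case (Suc n)
  have "inj_on (f ^^ n \<circ> f) V"
    using comp_inj_on[OF assms(1) inj_on_subset[OF Suc assms(2)]] .
  then show ?case by (simp only: funpow_Suc_right)
qed simp

section \<open>Directly finite, Hopfian and co-Hopfian modules\<close>

definition directly_finite_on :: "('r::ring_1 \<Rightarrow> 'v::ab_group_add \<Rightarrow> 'v) \<Rightarrow> 'v set \<Rightarrow> bool" where
  "directly_finite_on sm V \<longleftrightarrow> (\<forall>f g. module_endo sm f \<and> module_endo sm g \<and>
     f ` V \<subseteq> V \<and> g ` V \<subseteq> V \<and> (\<forall>x\<in>V. g (f x) = x) \<longrightarrow> (\<forall>x\<in>V. f (g x) = x))"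

definition hopfian_on :: "('r::ring_1 \<Rightarrow> 'v::ab_group_add \<Rightarrow> 'v) \<Rightarrow> 'v set \<Rightarrow> bool" where
  "hopfian_on sm V \<longleftrightarrow> (\<forall>g. module_endo sm g \<and> g ` V = V \<longrightarrow> inj_on g V)"

definition cohopfian_on :: "('r::ring_1 \<Rightarrow> 'v::ab_group_add \<Rightarrow> 'v) \<Rightarrow> 'v set \<Rightarrow> bool" where
  "cohopfian_on sm V \<longleftrightarrow> (\<forall>f. module_endo sm f \<and> f ` V \<subseteq> V \<and> inj_on f V \<longrightarrow> f ` V = V)"

lemma directly_finite_onI:
  assumes "\<And>f g x. module_endo sm f \<Longrightarrow> module_endo sm g \<Longrightarrow> f ` V \<subseteq> V \<Longrightarrow> g ` V \<subseteq> V \<Longrightarrow>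
    (\<And>y. y \<in> V \<Longrightarrow> g (f y) = y) \<Longrightarrow> x \<in> V \<Longrightarrow> f (g x) = x"
  shows "directly_finite_on sm V"
  unfolding directly_finite_on_def
proof (intro allI impI ballI, elim conjE)
  fix f g x
  assume "module_endo sm f" "module_endo sm g" "f ` V \<subseteq> V" "g ` V \<subseteq> V" "\<forall>y\<in>V. g (f y) = y" "x \<in> V"
  then show "f (g x) = x" using assms[of f g x] by blast
qed

lemma directly_finite_onD:
  assumes "directly_finite_on sm V" "module_endo sm f" "module_endo sm g" "f ` V \<subseteq> V" "g ` V \<subseteq> V"
    "\<And>y. y \<in> V \<Longrightarrow> g (f y) = y" "x \<in> V"
  shows "f (g x) = x"
  using assms unfolding directly_finite_on_def by simp

lemma hopfian_onD: "hopfian_on sm V \<Longrightarrow> module_endo sm g \<Longrightarrow> g ` V = V \<Longrightarrow> inj_on g V"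
  unfolding hopfian_on_def by simp

lemma cohopfian_onD:
  "cohopfian_on sm V \<Longrightarrow> module_endo sm f \<Longrightarrow> f ` V \<subseteq> V \<Longrightarrow> inj_on f V \<Longrightarrow> f ` V = V"
  unfolding cohopfian_on_def by blast

lemma hopfian_on_imp_directly_finite_on:
  assumes "hopfian_on sm V"
  shows "directly_finite_on sm V"
proof (rule directly_finite_onI)
  fix f g x
  assume f: "module_endo sm f" "f ` V \<subseteq> V" and g: "module_endo sm g" "g ` V \<subseteq> V"
    and gf: "\<And>y. y \<in> V \<Longrightarrow> g (f y) = y" and x: "x \<in> V"
  have "V \<subseteq> g ` V"
  proof
    fix y assume "y \<in> V"
    then have "y = g (f y)" "f y \<in> V" using gf f(2) by auto
    then show "y \<in> g ` V" by blast
  qed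
  then have inj: "inj_on g V" using hopfian_onD[OF assms g(1)] g(2) by blast
  have "g x \<in> V" using x g(2) by blast
  then have "f (g x) \<in> V" "g (f (g x)) = g x" using f(2) gf by blast+
  then show "f (g x) = x" using inj_onD[OF inj _ _ x] by blast
qed

lemma cohopfian_on_imp_directly_finite_on:
  assumes "cohopfian_on sm V"
  shows "directly_finite_on sm V"
proof (rule directly_finite_onI)
  fix f g x
  assume f: "module_endo sm f" "f ` V \<subseteq> V"
    and gf: "\<And>y. y \<in> V \<Longrightarrow> g (f y) = y" and x: "x \<in> V"
  have "inj_on f V" by (rule inj_on_inverseI[where g = g]) (rule gf)
  then have "f ` V = V" using cohopfian_onD[OF assms f] by blast
  then obtain y where y: "y \<in> V" "x = f y" using x by blast
  then show "f (g x) = x" using gf by metis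
qed

section \<open>Chain conditions\<close>

definition nested :: "bool \<Rightarrow> 'a set \<Rightarrow> 'a set \<Rightarrow> bool" where
  "nested ascending A B \<longleftrightarrow> (if ascending then A \<subseteq> B else B \<subseteq> A)"

definition chain_condition_on :: "('r::ring_1 \<Rightarrow> 'v::ab_group_add \<Rightarrow> 'v) \<Rightarrow> 'v set \<Rightarrow> bool \<Rightarrow> bool" where
  "chain_condition_on sm V ascending \<longleftrightarrow> (\<forall>N :: nat \<Rightarrow> 'v set.
     (\<forall>n. submodule sm (N n) \<and> N n \<subseteq> V) \<and> (\<forall>n. nested ascending (N n) (N (Suc n))) \<longrightarrow>
     (\<exists>m. \<forall>n\<ge>m. N n = N m))"

lemma chain_condition_onD:
  assumes "chain_condition_on sm V ascending" "\<And>n. submodule sm (N n)" "\<And>n. N n \<subseteq> V"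
    "\<And>n. nested ascending (N n) (N (Suc n))"
  shows "\<exists>m. \<forall>n\<ge>m. N n = N m"
  using assms(1)[unfolded chain_condition_on_def, THEN spec[of _ N]] assms(2-4) by blast

lemma noetherian_module_iff: "noetherian_module sm \<longleftrightarrow> chain_condition_on sm UNIV True"
  unfolding noetherian_module_def chain_condition_on_def nested_def by simp

lemma artinian_module_iff: "artinian_module sm \<longleftrightarrow> chain_condition_on sm UNIV False"
  unfolding artinian_module_def chain_condition_on_def nested_def by simp

lemma ascending_chain_imp_hopfian_on:
  assumes sm: "rmodule sm" and V: "submodule sm V" and acc: "chain_condition_on sm V True"
  shows "hopfian_on sm V"
  unfolding hopfian_on_def
proof (intro allI impI, elim conjE)
  fix g assume g: "module_endo sm g" "g ` V = V"
  define K where "K n = {x \<in> V. (g ^^ n) x = 0}" for n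
  have K_sub: "submodule sm (K n)" for n
    unfolding K_def by (rule submodule_kernel[OF sm V module_endo_funpow[OF g(1)]])
  have K_V: "K n \<subseteq> V" for n
    unfolding K_def by blast
  have K_mono: "nested True (K n) (K (Suc n))" for n
    unfolding K_def nested_def using module_endo_zero[OF g(1)] by auto
  obtain m where "\<forall>n\<ge>m. K n = K m"
    using chain_condition_onD[where N = K, OF acc K_sub K_V K_mono] by blast
  then have m: "K (Suc m) = K m" using le_SucI by blast
  have ker: "x = 0" if "x \<in> V" "g x = 0" for x
  proof -
    have "x \<in> (g ^^ m) ` V" using funpow_image_eq[OF g(2)] that(1) by simp
    then obtain y where y: "y \<in> V" "(g ^^ m) y = x" by blast
    then have "y \<in> K (Suc m)" using that unfolding K_def by simp
    then have "y \<in> K m" using m by simp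
    then show "x = 0" using y unfolding K_def by simp
  qed
  show "inj_on g V"
  proof (rule inj_onI)
    fix x y assume "x \<in> V" "y \<in> V" "g x = g y"
    then have "x - y \<in> V" "g (x - y) = 0"
      using submodule_diff[OF sm V] module_endo_diff[OF g(1)] by simp_all
    then show "x = y" using ker[of "x - y"] by simp
  qed
qed

lemma descending_chain_imp_cohopfian_on:
  assumes V: "submodule sm V" and dcc: "chain_condition_on sm V False"
  shows "cohopfian_on sm V"
  unfolding cohopfian_on_def
proof (intro allI impI, elim conjE)
  fix f assume f: "module_endo sm f" "f ` V \<subseteq> V" "inj_on f V"
  define I where "I n = (f ^^ n) ` V" for n
  have I_sub: "submodule sm (I n)" for n
    unfolding I_def by (rule submodule_image[OF V module_endo_funpow[OF f(1)]])
  have I_V: "I n \<subseteq> V" for n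
    unfolding I_def by (rule funpow_image_subset[OF f(2)])
  have I_antimono: "nested False (I n) (I (Suc n))" for n
    unfolding I_def nested_def using f(2) by (auto simp: funpow_Suc_right simp del: funpow.simps)
  obtain m where "\<forall>n\<ge>m. I n = I m"
    using chain_condition_onD[where N = I, OF dcc I_sub I_V I_antimono] by blast
  then have m: "I (Suc m) = I m" using le_SucI by blast
  have "x \<in> f ` V" if x: "x \<in> V" for x
  proof -
    have "(f ^^ m) x \<in> I m" unfolding I_def using x by blast
    then have "(f ^^ m) x \<in> I (Suc m)" using m by simp
    then obtain y where "y \<in> V" "(f ^^ m) x = (f ^^ m) (f y)"
      unfolding I_def by (auto simp: funpow_Suc_right simp del: funpow.simps)
    moreover have "f y \<in> V" using \<open>y \<in> V\<close> f(2) by blast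
    ultimately have "x = f y" using inj_onD[OF inj_on_funpow[OF f(3,2)] _ x] by blast
    then show ?thesis using \<open>y \<in> V\<close> by blast
  qed
  then show "f ` V = V" using f by blast
qed

definition smul_fun :: "('r \<Rightarrow> 'a \<Rightarrow> 'a) \<Rightarrow> 'r \<Rightarrow> ('k \<Rightarrow> 'a) \<Rightarrow> ('k \<Rightarrow> 'a)" where
  "smul_fun sm r x = (\<lambda>h. sm r (x h))"

lemma rmodule_smul_fun: "rmodule sm \<Longrightarrow> rmodule (smul_fun sm)"
  unfolding rmodule_def smul_fun_def by (auto simp: fun_eq_iff)

lemma submodule_supported: "rmodule sm \<Longrightarrow> submodule (smul_fun sm) {x. supported_in K x}"
  unfolding submodule_def supported_in_def smul_fun_def by (auto simp: rmodule_smul_zero)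

lemma supported_in_empty: "{x. supported_in {} x} = {0}"
  unfolding supported_in_def by (auto simp: fun_eq_iff)

lemma submodule_eval_image:
  assumes sm: "rmodule sm" and N: "submodule (smul_fun sm) N"
  shows "submodule sm ((\<lambda>x. x k) ` N)"
  unfolding submodule_def
proof (intro conjI ballI allI)
  show "0 \<in> (\<lambda>x. x k) ` N"
    using submodule_zero[OF N] by (intro image_eqI[where x = 0]) simp_all
next
  fix a b assume "a \<in> (\<lambda>x. x k) ` N" "b \<in> (\<lambda>x. x k) ` N"
  then obtain x y where "x \<in> N" "y \<in> N" "a = x k" "b = y k" by blast
  then show "a + b \<in> (\<lambda>x. x k) ` N"
    using submodule_add[OF N] by (intro image_eqI[where x = "x + y"]) simp_all
next
  fix r a assume "a \<in> (\<lambda>x. x k) ` N"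
  then obtain x where "x \<in> N" "a = x k" by blast
  then show "sm r a \<in> (\<lambda>x. x k) ` N"
    using submodule_smul[OF N] by (intro image_eqI[where x = "smul_fun sm r x"]) (simp_all add: smul_fun_def)
qed

lemma submodule_subset_by_slices:
  assumes sm: "rmodule sm" and N1: "submodule (smul_fun sm) N1" and N2: "submodule (smul_fun sm) N2"
    and sub: "N1 \<subseteq> N2" and N2_supp: "N2 \<subseteq> {x. supported_in (insert k K) x}"
    and slice: "N2 \<inter> {x. supported_in K x} \<subseteq> N1" and eval: "(\<lambda>x. x k) ` N2 \<subseteq> (\<lambda>x. x k) ` N1"
  shows "N2 \<subseteq> N1"
proof
  fix x assume x: "x \<in> N2"
  obtain y where y: "y \<in> N1" "y k = x k" using eval x by force
  have "y \<in> N2" using y(1) sub by blast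
  then have "x - y \<in> N2" using submodule_diff[OF rmodule_smul_fun[OF sm] N2 x] by blast
  moreover have "supported_in (insert k K) x" "supported_in (insert k K) y"
    using N2_supp x \<open>y \<in> N2\<close> by auto
  have "supported_in K (x - y)"
    unfolding supported_in_def
  proof (intro allI impI)
    fix h assume "h \<notin> K"
    then show "(x - y) h = 0"
      using y(2) \<open>supported_in (insert k K) x\<close> \<open>supported_in (insert k K) y\<close>
      unfolding supported_in_def by (cases "h = k") simp_all
  qed
  ultimately have "x - y \<in> N1" using slice by blast
  then have "(x - y) + y \<in> N1" using submodule_add[OF N1 _ y(1)] by blast
  then show "x \<in> N1" by simp
qed

lemma submodule_eq_by_slices:
  assumes sm: "rmodule sm" and N1: "submodule (smul_fun sm) N1" and N2: "submodule (smul_fun sm) N2"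
    and comparable: "N1 \<subseteq> N2 \<or> N2 \<subseteq> N1"
    and supp: "N1 \<subseteq> {x. supported_in (insert k K) x}" "N2 \<subseteq> {x. supported_in (insert k K) x}"
    and slice: "N1 \<inter> {x. supported_in K x} = N2 \<inter> {x. supported_in K x}"
    and eval: "(\<lambda>x. x k) ` N1 = (\<lambda>x. x k) ` N2"
  shows "N1 = N2"
  using comparable
proof
  assume "N1 \<subseteq> N2"
  moreover have "N2 \<subseteq> N1"
    by (rule submodule_subset_by_slices[OF sm N1 N2 \<open>N1 \<subseteq> N2\<close> supp(2)])
      (simp_all only: slice[symmetric] eval Int_lower1 order_refl)
  ultimately show ?thesis by (rule subset_antisym)
next
  assume "N2 \<subseteq> N1"
  moreover have "N1 \<subseteq> N2"
    by (rule submodule_subset_by_slices[OF sm N2 N1 \<open>N2 \<subseteq> N1\<close> supp(1)])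
      (simp_all only: slice eval Int_lower1 order_refl)
  ultimately show ?thesis by (rule subset_antisym[symmetric])
qed

lemma chain_condition_onI:
  assumes "\<And>N. (\<And>n. submodule sm (N n)) \<Longrightarrow> (\<And>n. N n \<subseteq> V) \<Longrightarrow>
    (\<And>n. nested ascending (N n) (N (Suc n))) \<Longrightarrow> \<exists>m. \<forall>n\<ge>m. N n = N m"
  shows "chain_condition_on sm V ascending"
  unfolding chain_condition_on_def
proof (intro allI impI, elim conjE)
  fix N :: "nat \<Rightarrow> _"
  assume "\<forall>n. submodule sm (N n) \<and> N n \<subseteq> V" "\<forall>n. nested ascending (N n) (N (Suc n))"
  then show "\<exists>m. \<forall>n\<ge>m. N n = N m" using assms[of N] by blast
qed

lemma nested_le:
  assumes step: "\<And>n. nested ascending (N n) (N (Suc n))" and "i \<le> j"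
  shows "nested ascending (N i) (N j)"
proof (cases ascending)
  case True
  then show ?thesis
    using lift_Suc_mono_le[of N, OF _ \<open>i \<le> j\<close>] step unfolding nested_def by simp
next
  case False
  then show ?thesis
    using lift_Suc_antimono_le[of N, OF _ \<open>i \<le> j\<close>] step unfolding nested_def by simp
qed

lemma chain_condition_on_supported_insert:
  fixes sm :: "'r::ring_1 \<Rightarrow> 'a::ab_group_add \<Rightarrow> 'a" and K :: "'k set"
  assumes sm: "rmodule sm" and cc: "chain_condition_on sm UNIV ascending"
    and K_cc: "chain_condition_on (smul_fun sm) {x :: 'k \<Rightarrow> 'a. supported_in K x} ascending"
  shows "chain_condition_on (smul_fun sm) {x :: 'k \<Rightarrow> 'a. supported_in (insert k K) x} ascending"
proof (rule chain_condition_onI)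
  fix N :: "nat \<Rightarrow> ('k \<Rightarrow> 'a) set"
  assume N_sub: "\<And>n. submodule (smul_fun sm) (N n)"
    and N_supp: "\<And>n. N n \<subseteq> {x. supported_in (insert k K) x}"
    and N_step: "\<And>n. nested ascending (N n) (N (Suc n))"
  define P where "P n = N n \<inter> {x. supported_in K x}" for n
  define Q where "Q n = (\<lambda>x. x k) ` N n" for n
  have "submodule (smul_fun sm) (P n)" "P n \<subseteq> {x. supported_in K x}" for n
    unfolding P_def using submodule_Int[OF N_sub submodule_supported[OF sm]] by auto
  moreover have "nested ascending (P n) (P (Suc n))" for n
    using N_step[of n] unfolding P_def nested_def by auto
  ultimately obtain m1 where m1: "\<forall>n\<ge>m1. P n = P m1"
    using chain_condition_onD[where N = P, OF K_cc] by blast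
  have "submodule sm (Q n)" for n
    unfolding Q_def by (rule submodule_eval_image[OF sm N_sub])
  moreover have "nested ascending (Q n) (Q (Suc n))" for n
    using N_step[of n] unfolding Q_def nested_def by (cases ascending) (simp_all add: image_mono)
  ultimately obtain m2 where m2: "\<forall>n\<ge>m2. Q n = Q m2"
    using chain_condition_onD[where N = Q, OF cc] by blast
  have "N n = N (max m1 m2)" if n: "n \<ge> max m1 m2" for n
  proof -
    let ?m = "max m1 m2"
    have "P n = P m1" "P ?m = P m1" "Q n = Q m2" "Q ?m = Q m2"
      using m1[rule_format, of n] m1[rule_format, of ?m] m2[rule_format, of n] m2[rule_format, of ?m] n
      by simp_all
    moreover have "N n \<subseteq> N ?m \<or> N ?m \<subseteq> N n"
      using nested_le[where N = N, OF N_step n] unfolding nested_def by (auto split: if_splits)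
    ultimately show ?thesis
      using submodule_eq_by_slices[OF sm N_sub N_sub _ N_supp N_supp] unfolding P_def Q_def by simp
  qed
  then show "\<exists>m. \<forall>n\<ge>m. N n = N m" by blast
qed

lemma chain_condition_on_supported:
  fixes sm :: "'r::ring_1 \<Rightarrow> 'a::ab_group_add \<Rightarrow> 'a" and K :: "'k set"
  assumes sm: "rmodule sm" and cc: "chain_condition_on sm UNIV ascending" and K: "finite K"
  shows "chain_condition_on (smul_fun sm) {x :: 'k \<Rightarrow> 'a. supported_in K x} ascending"
  using K
proof (induction K rule: finite_induct)
  case empty
  show ?case
  proof (rule chain_condition_onI)
    fix N :: "nat \<Rightarrow> ('k \<Rightarrow> 'a) set"
    assume "\<And>n. submodule (smul_fun sm) (N n)" "\<And>n. N n \<subseteq> {x. supported_in {} x}"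
    then have "N n = {0}" for n
      unfolding supported_in_empty using submodule_zero by (metis subset_singletonD empty_iff)
    then show "\<exists>m. \<forall>n\<ge>m. N n = N m" by metis
  qed
next
  case (insert k K)
  show ?case by (rule chain_condition_on_supported_insert[OF sm cc insert.IH])
qed

section \<open>Surjective endomorphisms of finitely generated modules\<close>

text \<open>The operators p(g) with p a polynomial over R; they commute with each other when R is
  commutative.\<close>
inductive_set poly_ops :: "('r::ring_1 \<Rightarrow> 'v::ab_group_add \<Rightarrow> 'v) \<Rightarrow> ('v \<Rightarrow> 'v) \<Rightarrow> ('v \<Rightarrow> 'v) set"
  for sm g where
  scalar: "sm r \<in> poly_ops sm g"
| gen: "g \<in> poly_ops sm g"
| add: "a \<in> poly_ops sm g \<Longrightarrow> b \<in> poly_ops sm g \<Longrightarrow> (\<lambda>x. a x + b x) \<in> poly_ops sm g"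
| comp: "a \<in> poly_ops sm g \<Longrightarrow> b \<in> poly_ops sm g \<Longrightarrow> a \<circ> b \<in> poly_ops sm g"

lemma poly_ops_diff:
  assumes sm: "rmodule sm" and a: "a \<in> poly_ops sm g" and b: "b \<in> poly_ops sm g"
  shows "(\<lambda>x. a x - b x) \<in> poly_ops sm g"
proof -
  have "(\<lambda>x. a x + (sm (-1) \<circ> b) x) \<in> poly_ops sm g"
    by (intro poly_ops.add poly_ops.comp poly_ops.scalar a b)
  moreover have "(\<lambda>x. a x + (sm (-1) \<circ> b) x) = (\<lambda>x. a x - b x)"
    by (simp add: rmodule_minus_one_smul[OF sm])
  ultimately show ?thesis by simp
qed

lemma module_endo_scalar:
  fixes sm :: "'r::ring_1 \<Rightarrow> 'v::ab_group_add \<Rightarrow> 'v"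
  assumes sm: "rmodule sm" and comm: "\<forall>r s :: 'r. r * s = s * r"
  shows "module_endo sm (sm r)"
proof -
  have "sm r (sm s x) = sm s (sm r x)" for s x
  proof -
    have "sm r (sm s x) = sm (r * s) x" by (simp add: rmoduleD(3)[OF sm])
    also have "\<dots> = sm (s * r) x" by (simp only: comm[rule_format, of r s])
    also have "\<dots> = sm s (sm r x)" by (simp add: rmoduleD(3)[OF sm])
    finally show ?thesis .
  qed
  then show ?thesis unfolding module_endo_def using rmoduleD(1)[OF sm] by blast
qed

lemma module_endo_poly_ops:
  fixes sm :: "'r::ring_1 \<Rightarrow> 'v::ab_group_add \<Rightarrow> 'v"
  assumes sm: "rmodule sm" and comm: "\<forall>r s :: 'r. r * s = s * r" and g: "module_endo sm g"
  shows "a \<in> poly_ops sm g \<Longrightarrow> module_endo sm a"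
proof (induction rule: poly_ops.induct)
  case (scalar r)
  show ?case by (rule module_endo_scalar[OF sm comm])
next
  case gen
  show ?case by (rule g)
next
  case (add a b)
  then show ?case unfolding module_endo_def by (simp add: algebra_simps rmoduleD(1)[OF sm])
next
  case (comp a b)
  show ?case by (rule module_endo_comp[OF comp.IH])
qed

lemma poly_ops_commute_gen:
  assumes g: "module_endo sm g"
  shows "a \<in> poly_ops sm g \<Longrightarrow> a (g x) = g (a x)"
  by (induction arbitrary: x rule: poly_ops.induct)
    (simp_all add: module_endo_smul[OF g] module_endo_add[OF g])

lemma poly_ops_commute:
  fixes sm :: "'r::ring_1 \<Rightarrow> 'v::ab_group_add \<Rightarrow> 'v"
  assumes sm: "rmodule sm" and comm: "\<forall>r s :: 'r. r * s = s * r" and g: "module_endo sm g"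
    and a: "a \<in> poly_ops sm g"
  shows "b \<in> poly_ops sm g \<Longrightarrow> a (b x) = b (a x)"
proof (induction arbitrary: x rule: poly_ops.induct)
  case (scalar r)
  show ?case using module_endo_smul[OF module_endo_poly_ops[OF sm comm g a]] .
next
  case gen
  show ?case using poly_ops_commute_gen[OF g a] .
next
  case (add b1 b2)
  then show ?case using module_endo_add[OF module_endo_poly_ops[OF sm comm g a]] by simp
next
  case (comp b1 b2)
  then show ?case by simp
qed

inductive_set poly_span :: "('r::ring_1 \<Rightarrow> 'v::ab_group_add \<Rightarrow> 'v) \<Rightarrow> ('v \<Rightarrow> 'v) \<Rightarrow> 'v set \<Rightarrow> 'v set"
  for sm g Y where
  zero: "0 \<in> poly_span sm g Y"
| base: "y \<in> Y \<Longrightarrow> y \<in> poly_span sm g Y"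
| add: "u \<in> poly_span sm g Y \<Longrightarrow> v \<in> poly_span sm g Y \<Longrightarrow> u + v \<in> poly_span sm g Y"
| app: "a \<in> poly_ops sm g \<Longrightarrow> u \<in> poly_span sm g Y \<Longrightarrow> a u \<in> poly_span sm g Y"

lemma submodule_poly_span: "submodule sm (poly_span sm g Y)"
  unfolding submodule_def using poly_span.zero poly_span.add poly_span.app[OF poly_ops.scalar] by blast

lemma poly_span_empty:
  fixes sm :: "'r::ring_1 \<Rightarrow> 'v::ab_group_add \<Rightarrow> 'v"
  assumes sm: "rmodule sm" and comm: "\<forall>r s :: 'r. r * s = s * r" and g: "module_endo sm g"
  shows "u \<in> poly_span sm g {} \<Longrightarrow> u = 0"
proof (induction rule: poly_span.induct)
  case (app a u)
  then show ?case using module_endo_zero[OF module_endo_poly_ops[OF sm comm g]] by simp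
qed simp_all

lemma poly_span_insert:
  fixes sm :: "'r::ring_1 \<Rightarrow> 'v::ab_group_add \<Rightarrow> 'v"
  assumes sm: "rmodule sm" and comm: "\<forall>r s :: 'r. r * s = s * r" and g: "module_endo sm g"
  shows "w \<in> poly_span sm g (insert y Z) \<Longrightarrow> \<exists>c\<in>poly_ops sm g. \<exists>z\<in>poly_span sm g Z. w = c y + z"
proof (induction rule: poly_span.induct)
  case zero
  have "0 = sm 0 y + 0" using rmodule_zero_smul[OF sm] by simp
  then show ?case using poly_ops.scalar poly_span.zero by blast
next
  case (base w)
  then consider "w = y" | "w \<in> Z" by blast
  then show ?case
  proof cases
    case 1
    then have "w = sm 1 y + 0" using rmoduleD(4)[OF sm] by simp
    then show ?thesis using poly_ops.scalar poly_span.zero by blast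
  next
    case 2
    have "w = sm 0 y + w" using rmodule_zero_smul[OF sm] by simp
    then show ?thesis using 2 poly_ops.scalar poly_span.base by blast
  qed
next
  case (add u v)
  then obtain c1 z1 c2 z2 where cz: "c1 \<in> poly_ops sm g" "z1 \<in> poly_span sm g Z" "u = c1 y + z1"
    "c2 \<in> poly_ops sm g" "z2 \<in> poly_span sm g Z" "v = c2 y + z2" by blast
  define c where "c = (\<lambda>x. c1 x + c2 x)"
  have "c \<in> poly_ops sm g" unfolding c_def using cz by (simp add: poly_ops.add)
  moreover have "z1 + z2 \<in> poly_span sm g Z" using cz by (simp add: poly_span.add)
  moreover have "u + v = c y + (z1 + z2)" unfolding c_def using cz by (simp add: algebra_simps)
  ultimately show ?case by blast
next
  case (app a u)
  then obtain c z where cz: "c \<in> poly_ops sm g" "z \<in> poly_span sm g Z" "u = c y + z" by blast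
  then have "a u = (a \<circ> c) y + a z"
    using module_endo_add[OF module_endo_poly_ops[OF sm comm g app.hyps(1)]] by simp
  then show ?case using cz app.hyps(1) poly_ops.comp poly_span.app by blast
qed

lemma poly_span_reduce:
  fixes sm :: "'r::ring_1 \<Rightarrow> 'v::ab_group_add \<Rightarrow> 'v"
  assumes sm: "rmodule sm" and comm: "\<forall>r s :: 'r. r * s = s * r" and g: "module_endo sm g"
    and b: "b \<in> poly_ops sm g" and y: "y - b (g y) \<in> poly_span sm g Z"
    and w: "w \<in> poly_span sm g (insert y Z)"
  shows "w - b (g w) \<in> poly_span sm g Z"
proof -
  obtain c z where c: "c \<in> poly_ops sm g" and z: "z \<in> poly_span sm g Z" and w_eq: "w = c y + z"
    using poly_span_insert[OF sm comm g w] by blast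
  have "b (g (c y)) = b (c (g y))"
    using poly_ops_commute_gen[OF g c, symmetric] by simp
  also have "\<dots> = c (b (g y))"
    using poly_ops_commute[OF sm comm g b c] .
  finally have comm_bc: "b (g (c y)) = c (b (g y))" .
  have "w - b (g w) = c (y - b (g y)) + (z - b (g z))"
    unfolding w_eq
    using module_endo_add[OF g] module_endo_add[OF module_endo_poly_ops[OF sm comm g b]]
      module_endo_diff[OF module_endo_poly_ops[OF sm comm g c]]
    by (simp add: comm_bc algebra_simps)
  moreover have "c (y - b (g y)) \<in> poly_span sm g Z"
    using c y by (rule poly_span.app)
  moreover have "z - b (g z) \<in> poly_span sm g Z"
    using submodule_diff[OF sm submodule_poly_span z poly_span.app[OF poly_ops.comp[OF b poly_ops.gen] z]]
    by simp
  ultimately show ?thesis using poly_span.add by simp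
qed

lemma poly_reductions_comp:
  fixes sm :: "'r::ring_1 \<Rightarrow> 'v::ab_group_add \<Rightarrow> 'v"
  assumes sm: "rmodule sm" and comm: "\<forall>r s :: 'r. r * s = s * r" and g: "module_endo sm g"
    and a: "a \<in> poly_ops sm g" and b: "b \<in> poly_ops sm g"
  shows "\<exists>e\<in>poly_ops sm g. \<forall>x. x - e (g x) = (x - a (g x)) - b (g (x - a (g x)))"
proof
  let ?e = "\<lambda>x. (a x + b x) - (b \<circ> (a \<circ> g)) x"
  show "?e \<in> poly_ops sm g"
    by (intro poly_ops_diff[OF sm] poly_ops.add poly_ops.comp a b poly_ops.gen)
  show "\<forall>x. x - ?e (g x) = (x - a (g x)) - b (g (x - a (g x)))"
  proof
    fix x
    have "b (g (x - a (g x))) = b (g x) - b (a (g (g x)))"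
      by (simp add: module_endo_diff[OF g] module_endo_diff[OF module_endo_poly_ops[OF sm comm g b]]
          poly_ops_commute_gen[OF g a])
    then show "x - ?e (g x) = (x - a (g x)) - b (g (x - a (g x)))"
      by (simp add: algebra_simps)
  qed
qed

lemma poly_span_kill_generator:
  fixes sm :: "'r::ring_1 \<Rightarrow> 'v::ab_group_add \<Rightarrow> 'v"
  assumes sm: "rmodule sm" and comm: "\<forall>r s :: 'r. r * s = s * r" and g: "module_endo sm g"
    and a: "a \<in> poly_ops sm g" and u: "u - a (g u) \<in> poly_span sm g (insert (g u) Z)"
  shows "\<exists>b\<in>poly_ops sm g. g u - b (g (g u)) \<in> poly_span sm g Z"
proof -
  obtain c z where c: "c \<in> poly_ops sm g" and z: "z \<in> poly_span sm g Z"
    and cz: "u - a (g u) = c (g u) + z"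
    using poly_span_insert[OF sm comm g u] by blast
  have "g u - a (g (g u)) = g (u - a (g u))"
    using module_endo_diff[OF g] poly_ops_commute_gen[OF g a] by simp
  also have "\<dots> = c (g (g u)) + g z"
    unfolding cz using module_endo_add[OF g] poly_ops_commute_gen[OF g c] by simp
  finally have "g u - (a (g (g u)) + c (g (g u))) = g z"
    by (simp add: algebra_simps)
  moreover have "g z \<in> poly_span sm g Z"
    using poly_ops.gen z by (rule poly_span.app)
  ultimately have reduced: "g u - (a (g (g u)) + c (g (g u))) \<in> poly_span sm g Z"
    by simp
  show ?thesis
  proof (rule bexI[of _ "\<lambda>x. a x + c x"])
    show "g u - (\<lambda>x. a x + c x) (g (g u)) \<in> poly_span sm g Z"
      using reduced by simp
    show "(\<lambda>x. a x + c x) \<in> poly_ops sm g"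
      using a c by (rule poly_ops.add)
  qed
qed

text \<open>A Nakayama-type induction removing one generator at a time: surjectivity writes a
  generator as y = g u, which some reduction x - b (g x) kills modulo the other generators, and
  such reductions compose.\<close>
lemma poly_left_inverse_mod_span:
  fixes sm :: "'r::ring_1 \<Rightarrow> 'v::ab_group_add \<Rightarrow> 'v"
  assumes sm: "rmodule sm" and comm: "\<forall>r s :: 'r. r * s = s * r" and g: "module_endo sm g"
    and XV: "X \<subseteq> V" and VX: "V \<subseteq> poly_span sm g X" and surj: "V \<subseteq> g ` V"
    and Y: "finite Y" "Y \<subseteq> X"
  shows "\<exists>a\<in>poly_ops sm g. \<forall>x\<in>V. x - a (g x) \<in> poly_span sm g (X - Y)"
  using Y
proof (induction Y rule: finite_induct)
  case empty
  show ?case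
  proof (rule bexI[of _ "sm 0"])
    show "\<forall>x\<in>V. x - sm 0 (g x) \<in> poly_span sm g (X - {})"
      using VX by (auto simp: rmodule_zero_smul[OF sm])
  qed (rule poly_ops.scalar)
next
  case (insert y Y)
  define Z where "Z = X - insert y Y"
  have XY: "X - Y = insert y Z" unfolding Z_def using insert by auto
  obtain a where a: "a \<in> poly_ops sm g" "\<forall>x\<in>V. x - a (g x) \<in> poly_span sm g (insert y Z)"
    using insert.IH insert.prems unfolding XY by blast
  have "y \<in> g ` V" using insert.prems XV surj by blast
  then obtain u where u: "u \<in> V" "y = g u" by blast
  have "u - a (g u) \<in> poly_span sm g (insert (g u) Z)"
    using a(2) u by simp
  then obtain b where b: "b \<in> poly_ops sm g" "y - b (g y) \<in> poly_span sm g Z"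
    using poly_span_kill_generator[OF sm comm g a(1)] u(2) by blast
  obtain e where e: "e \<in> poly_ops sm g" "\<forall>x. x - e (g x) = (x - a (g x)) - b (g (x - a (g x)))"
    using poly_reductions_comp[OF sm comm g a(1) b(1)] by blast
  have "x - e (g x) \<in> poly_span sm g Z" if "x \<in> V" for x
    unfolding e(2)[rule_format] using poly_span_reduce[OF sm comm g b] a(2) that by simp
  then show ?case using e(1) unfolding Z_def by blast
qed

lemma fin_gen_imp_hopfian_on:
  fixes sm :: "'r::ring_1 \<Rightarrow> 'v::ab_group_add \<Rightarrow> 'v"
  assumes sm: "rmodule sm" and comm: "\<forall>r s :: 'r. r * s = s * r"
    and X: "finite X" "X \<subseteq> V" "V \<subseteq> mspan sm X"
  shows "hopfian_on sm V"
  unfolding hopfian_on_def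
proof (intro allI impI, elim conjE)
  fix g assume g: "module_endo sm g" "g ` V = V"
  have "mspan sm X \<subseteq> poly_span sm g X"
    by (rule mspan_least[OF submodule_poly_span]) (auto intro: poly_span.base)
  then obtain a where a: "a \<in> poly_ops sm g" "\<forall>x\<in>V. x - a (g x) \<in> poly_span sm g (X - X)"
    using poly_left_inverse_mod_span[OF sm comm g(1) X(2) _ _ X(1) order_refl] X(3) g(2) by blast
  have "a (g x) = x" if "x \<in> V" for x
    using poly_span_empty[OF sm comm g(1)] a(2) that by fastforce
  then show "inj_on g V" by (rule inj_on_inverseI)
qed

section \<open>Endomorphisms of finite direct sums\<close>

lemma supported_subset_submodule:
  fixes sm :: "'r::ring_1 \<Rightarrow> 'a::ab_group_add \<Rightarrow> 'a" and K :: "'k set"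
  assumes sm: "rmodule sm" and gen: "mspan sm S = UNIV" and N: "submodule (smul_fun sm) N"
    and K: "finite K" and basis: "\<And>k a. k \<in> K \<Longrightarrow> a \<in> S \<Longrightarrow> 0(k := a) \<in> N"
  shows "{x. supported_in K x} \<subseteq> N"
  using K basis
proof (induction K rule: finite_induct)
  case empty
  show ?case using submodule_zero[OF N] by (simp add: supported_in_empty)
next
  case (insert k K)
  show ?case
  proof
    fix x :: "'k \<Rightarrow> 'a" assume x: "x \<in> {x. supported_in (insert k K) x}"
    have "(0 :: 'k \<Rightarrow> 'a)(k := 0) = 0"
      by (simp add: fun_eq_iff)
    moreover have "(0 :: 'k \<Rightarrow> 'a)(k := a + b) = 0(k := a) + 0(k := b)" for a b
      by (simp add: fun_eq_iff)
    moreover have "(0 :: 'k \<Rightarrow> 'a)(k := sm r a) = smul_fun sm r (0(k := a))" for r a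
      by (simp add: fun_eq_iff smul_fun_def rmodule_smul_zero[OF sm])
    ultimately have "submodule sm {a. 0(k := a) \<in> N}"
      unfolding submodule_def using submodule_zero[OF N] submodule_add[OF N] submodule_smul[OF N]
      by simp
    moreover have "S \<subseteq> {a. 0(k := a) \<in> N}" using insert.prems by blast
    ultimately have "0(k := x k) \<in> N" using mspan_least gen by blast
    moreover have "x(k := 0) \<in> N"
      using x insert.IH insert.prems unfolding supported_in_def by auto
    ultimately have "0(k := x k) + x(k := 0) \<in> N" by (rule submodule_add[OF N])
    moreover have "0(k := x k) + x(k := 0) = x" by (simp add: fun_eq_iff)
    ultimately show "x \<in> N" by simp
  qed
qed

lemma fin_gen_module_supported:
  fixes sm :: "'r::ring_1 \<Rightarrow> 'a::ab_group_add \<Rightarrow> 'a" and K :: "'k set"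
  assumes sm: "rmodule sm" and fg: "fin_gen_module sm" and K: "finite K"
  shows "\<exists>X. finite X \<and> X \<subseteq> {x. supported_in K x} \<and> {x. supported_in K x} \<subseteq> mspan (smul_fun sm) X"
proof -
  obtain S where S: "finite S" "mspan sm S = UNIV"
    using fg unfolding fin_gen_module_def by blast
  define X where "X = (\<lambda>(k, a). (0 :: 'k \<Rightarrow> 'a)(k := a)) ` (K \<times> S)"
  have "finite X" unfolding X_def using K S(1) by simp
  moreover have "X \<subseteq> {x. supported_in K x}" unfolding X_def supported_in_def by auto
  moreover have "{x. supported_in K x} \<subseteq> mspan (smul_fun sm) X"
  proof (rule supported_subset_submodule[OF sm S(2) submodule_mspan K])
    fix k a assume "k \<in> K" "a \<in> S"
    then have "0(k := a) \<in> X" unfolding X_def by force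
    then show "0(k := a) \<in> mspan (smul_fun sm) X" using mspan_superset by blast
  qed
  ultimately show ?thesis by blast
qed

lemma directly_finite_on_supported:
  fixes sm :: "'r::ring_1 \<Rightarrow> 'a::ab_group_add \<Rightarrow> 'a" and K :: "'k set"
  assumes sm: "rmodule sm" and K: "finite K"
    and A: "noetherian_module sm \<or> artinian_module sm \<or>
      ((\<forall>r s :: 'r. r * s = s * r) \<and> fin_gen_module sm)"
  shows "directly_finite_on (smul_fun sm) {x :: 'k \<Rightarrow> 'a. supported_in K x}"
proof -
  let ?V = "{x :: 'k \<Rightarrow> 'a. supported_in K x}"
  have V: "submodule (smul_fun sm) ?V" by (rule submodule_supported[OF sm])
  note sm' = rmodule_smul_fun[OF sm]
  from A consider "noetherian_module sm" | "artinian_module sm"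
    | "\<forall>r s :: 'r. r * s = s * r" "fin_gen_module sm" by blast
  then show ?thesis
  proof cases
    case 1
    then have "chain_condition_on sm UNIV True" by (simp add: noetherian_module_iff)
    then have "chain_condition_on (smul_fun sm) ?V True" by (rule chain_condition_on_supported[OF sm _ K])
    then show ?thesis
      by (intro hopfian_on_imp_directly_finite_on ascending_chain_imp_hopfian_on[OF sm' V])
  next
    case 2
    then have "chain_condition_on sm UNIV False" by (simp add: artinian_module_iff)
    then have "chain_condition_on (smul_fun sm) ?V False" by (rule chain_condition_on_supported[OF sm _ K])
    then show ?thesis
      by (intro cohopfian_on_imp_directly_finite_on descending_chain_imp_cohopfian_on[OF V])
  next
    case 3
    obtain X where "finite X" "X \<subseteq> ?V" "?V \<subseteq> mspan (smul_fun sm) X"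
      using fin_gen_module_supported[OF sm 3(2) K] by blast
    then show ?thesis
      by (intro hopfian_on_imp_directly_finite_on fin_gen_imp_hopfian_on[OF sm' 3(1)])
  qed
qed

lemma restr_cong: "(\<And>m. m \<in> M \<Longrightarrow> f m = f' m) \<Longrightarrow> restr M f = restr M f'"
  unfolding restr_def by (auto simp: fun_eq_iff)

lemma supported_in_restr: "supported_in M (restr M x)"
  unfolding supported_in_def restr_def by simp

lemma restr_supported: "supported_in M x \<Longrightarrow> restr M x = x"
  unfolding supported_in_def restr_def by (auto simp: fun_eq_iff)

lemma CA_apply:
  assumes "\<forall>c g. \<tau> c g = \<mu> (restr M (shift (- g) c))"
  shows "\<tau> c g = \<mu> (restr M (\<lambda>h. c (g + h)))"
  using assms unfolding shift_def by simp

lemma CA_shift_commute: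
  assumes "\<forall>c g. \<tau> c g = \<mu> (restr M (shift (- g) c))"
  shows "\<tau> (\<lambda>h. c (g + h)) x = \<tau> c (g + x)"
  using CA_apply[OF assms] by (simp add: add.assoc)

lemma CA_comp_eq_id_at_origin:
  assumes \<sigma>: "\<forall>c g. \<sigma> c g = \<mu> (restr M (shift (- g) c))"
    and \<tau>: "\<forall>c g. \<tau> c g = \<nu> (restr N (shift (- g) c))"
    and origin: "\<And>c. \<tau> (\<sigma> c) 0 = c 0"
  shows "\<tau> \<circ> \<sigma> = id"
proof (rule ext)
  fix c
  show "(\<tau> \<circ> \<sigma>) c = id c"
  proof
    fix g
    have "\<tau> (\<sigma> c) g = \<tau> (\<lambda>h. \<sigma> c (g + h)) 0"
      using CA_shift_commute[OF \<tau>, of "\<sigma> c" g 0] by simp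
    also have "\<dots> = \<tau> (\<sigma> (\<lambda>h. c (g + h))) 0"
      using ext[of "\<sigma> (\<lambda>h. c (g + h))", OF CA_shift_commute[OF \<sigma>]] by simp
    also have "\<dots> = c g" using origin by simp
    finally show "(\<tau> \<circ> \<sigma>) c g = id c g" by simp
  qed
qed

lemma CA_Rmod_linear:
  assumes sm: "rmodule sm" and \<tau>: "CA_Rmod sm \<tau>"
  shows "module_endo (smul_fun sm) \<tau>"
proof -
  obtain M \<mu> where M: "\<forall>c g. \<tau> c g = \<mu> (restr M (shift (- g) c))"
    and add: "\<forall>x y. supported_in M x \<longrightarrow> supported_in M y \<longrightarrow> \<mu> (\<lambda>h. x h + y h) = \<mu> x + \<mu> y"
    and smul: "\<forall>r x. supported_in M x \<longrightarrow> \<mu> (\<lambda>h. sm r (x h)) = sm r (\<mu> x)"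
    using \<tau> unfolding CA_Rmod_def by blast
  have "\<tau> (c + d) g = \<tau> c g + \<tau> d g" for c d g
  proof -
    have "restr M (shift (- g) (c + d)) = (\<lambda>h. restr M (shift (- g) c) h + restr M (shift (- g) d) h)"
      unfolding restr_def shift_def by (auto simp: fun_eq_iff)
    then show ?thesis using M add[rule_format, OF supported_in_restr supported_in_restr] by simp
  qed
  moreover have "\<tau> (smul_fun sm r c) g = sm r (\<tau> c g)" for r c g
  proof -
    have "restr M (shift (- g) (smul_fun sm r c)) = (\<lambda>h. sm r (restr M (shift (- g) c) h))"
      unfolding restr_def shift_def smul_fun_def by (auto simp: fun_eq_iff rmodule_smul_zero[OF sm])
    then show ?thesis using M smul[rule_format, OF supported_in_restr] by simp
  qed
  ultimately show ?thesis unfolding module_endo_def smul_fun_def by (simp add: fun_eq_iff)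
qed

lemma CA_Rmod_inv_into:
  assumes sm: "rmodule sm" and \<tau>: "CA_Rmod sm \<tau>" and rev: "reversible \<tau>"
  shows "CA_Rmod sm (inv_into UNIV \<tau>)"
proof -
  let ?i = "inv_into UNIV \<tau>"
  have bij: "bij \<tau>" using rev unfolding reversible_def by blast
  have lin: "module_endo (smul_fun sm) \<tau>" by (rule CA_Rmod_linear[OF sm \<tau>])
  have \<tau>_i: "\<tau> (?i c) = c" for c using bij by (simp add: bij_is_surj surj_f_inv_f)
  have i_\<tau>: "?i (\<tau> c) = c" for c using bij by (simp add: bij_is_inj inv_f_f)
  have i_add: "?i (c + d) = ?i c + ?i d" for c d
    using i_\<tau>[of "?i c + ?i d"] module_endo_add[OF lin] \<tau>_i by simp
  have i_smul: "?i (smul_fun sm r c) = smul_fun sm r (?i c)" for r c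
    using i_\<tau>[of "smul_fun sm r (?i c)"] module_endo_smul[OF lin] \<tau>_i by simp
  obtain M \<mu> where M: "finite M" "\<forall>c g. ?i c g = \<mu> (restr M (shift (- g) c))"
    using rev unfolding reversible_def is_CA_def by blast
  have \<mu>: "\<mu> x = ?i x 0" if "supported_in M x" for x
    using M(2) restr_supported[OF that] by (simp add: shift_def)
  have "\<mu> (\<lambda>h. x h + y h) = \<mu> x + \<mu> y" if "supported_in M x" "supported_in M y" for x y
  proof -
    have "supported_in M (\<lambda>h. x h + y h)" using that unfolding supported_in_def by simp
    then show ?thesis using \<mu> that i_add[of x y] by (simp add: plus_fun_def)
  qed
  moreover have "\<mu> (\<lambda>h. sm r (x h)) = sm r (\<mu> x)" if "supported_in M x" for r x
  proof -
    have "supported_in M (smul_fun sm r x)"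
      using that rmodule_smul_zero[OF sm] unfolding supported_in_def smul_fun_def by simp
    then show ?thesis using \<mu> that i_smul[of r x] by (simp add: smul_fun_def)
  qed
  ultimately show ?thesis unfolding CA_Rmod_def using M by blast
qed

section \<open>Transplanting automata to finite groups\<close>

text \<open>The cellular automaton with memory set \<phi> ` M and local rule \<mu> on the finite group H;
  configurations on H are functions vanishing outside carrier H.\<close>
definition transplant :: "'k monoid \<Rightarrow> ('g \<Rightarrow> 'k) \<Rightarrow> 'g set \<Rightarrow> (('g \<Rightarrow> 'a) \<Rightarrow> 'a) \<Rightarrow>
    ('k \<Rightarrow> 'a::zero) \<Rightarrow> ('k \<Rightarrow> 'a)" where
  "transplant H \<phi> M \<mu> d h = (if h \<in> carrier H then \<mu> (restr M (\<lambda>m. d (h \<otimes>\<^bsub>H\<^esub> \<phi> m))) else 0)"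

lemma transplant_supported: "supported_in (carrier H) (transplant H \<phi> M \<mu> d)"
  unfolding supported_in_def transplant_def by simp

lemma module_endo_transplant:
  assumes sm: "rmodule sm"
    and add: "\<forall>x y. supported_in M x \<longrightarrow> supported_in M y \<longrightarrow> \<mu> (\<lambda>h. x h + y h) = \<mu> x + \<mu> y"
    and smul: "\<forall>r x. supported_in M x \<longrightarrow> \<mu> (\<lambda>h. sm r (x h)) = sm r (\<mu> x)"
  shows "module_endo (smul_fun sm) (transplant H \<phi> M \<mu>)"
proof -
  have "transplant H \<phi> M \<mu> (d + e) h = transplant H \<phi> M \<mu> d h + transplant H \<phi> M \<mu> e h" for d e h
  proof -
    have "restr M (\<lambda>m. (d + e) (h \<otimes>\<^bsub>H\<^esub> \<phi> m)) =
        (\<lambda>m. restr M (\<lambda>m. d (h \<otimes>\<^bsub>H\<^esub> \<phi> m)) m + restr M (\<lambda>m. e (h \<otimes>\<^bsub>H\<^esub> \<phi> m)) m)"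
      unfolding restr_def by (auto simp: fun_eq_iff)
    then show ?thesis
      unfolding transplant_def using add[rule_format, OF supported_in_restr supported_in_restr] by simp
  qed
  moreover have "transplant H \<phi> M \<mu> (smul_fun sm r d) h = sm r (transplant H \<phi> M \<mu> d h)" for r d h
  proof -
    have "restr M (\<lambda>m. smul_fun sm r d (h \<otimes>\<^bsub>H\<^esub> \<phi> m)) = (\<lambda>m. sm r (restr M (\<lambda>m. d (h \<otimes>\<^bsub>H\<^esub> \<phi> m)) m))"
      unfolding restr_def smul_fun_def by (auto simp: fun_eq_iff rmodule_smul_zero[OF sm])
    then show ?thesis
      unfolding transplant_def using smul[rule_format, OF supported_in_restr]
      by (simp add: rmodule_smul_zero[OF sm])
  qed
  ultimately show ?thesis unfolding module_endo_def smul_fun_def by (simp add: fun_eq_iff)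
qed

definition partial_hom :: "'k monoid \<Rightarrow> ('g::plus \<Rightarrow> 'k) \<Rightarrow> 'g set \<Rightarrow> bool" where
  "partial_hom H \<phi> S \<longleftrightarrow> \<phi> ` S \<subseteq> carrier H \<and>
     (\<forall>a\<in>S. \<forall>b\<in>S. a + b \<in> S \<longrightarrow> \<phi> (a + b) = \<phi> a \<otimes>\<^bsub>H\<^esub> \<phi> b)"

lemma partial_hom_zero:
  assumes "group H" "partial_hom H \<phi> S" "(0 :: 'g::monoid_add) \<in> S"
  shows "\<phi> 0 = \<one>\<^bsub>H\<^esub>"
proof -
  interpret H: group H by (rule assms(1))
  have \<phi>: "\<phi> ` S \<subseteq> carrier H"
    and hom: "\<forall>a\<in>S. \<forall>b\<in>S. a + b \<in> S \<longrightarrow> \<phi> (a + b) = \<phi> a \<otimes>\<^bsub>H\<^esub> \<phi> b"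
    using assms(2) unfolding partial_hom_def by simp_all
  have "\<phi> 0 \<in> carrier H" "\<phi> 0 = \<phi> 0 \<otimes>\<^bsub>H\<^esub> \<phi> 0"
    using \<phi> hom[rule_format, OF assms(3) assms(3)] assms(3) by auto
  then show ?thesis using H.l_cancel_one'[of "\<phi> 0" "\<phi> 0"] by simp
qed

lemma transplant_comp:
  fixes H :: "'k monoid" and \<phi> :: "'g::group_add \<Rightarrow> 'k"
  assumes H: "group H" and h: "h \<in> carrier H" and \<phi>S: "partial_hom H \<phi> S"
    and S: "M1 \<subseteq> S" "M2 \<subseteq> S" "\<And>a b. a \<in> M1 \<Longrightarrow> b \<in> M2 \<Longrightarrow> a + b \<in> S"
    and \<tau>1: "\<forall>c g. \<tau>1 c g = \<mu>1 (restr M1 (shift (- g) c))"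
    and \<tau>2: "\<forall>c g. \<tau>2 c g = \<mu>2 (restr M2 (shift (- g) c))"
    and d: "\<And>x. x \<in> S \<Longrightarrow> d (h \<otimes>\<^bsub>H\<^esub> \<phi> x) = c x"
  shows "transplant H \<phi> M1 \<mu>1 (transplant H \<phi> M2 \<mu>2 d) h = \<tau>1 (\<tau>2 c) 0"
proof -
  interpret H: group H by (rule H)
  have \<phi>: "\<phi> ` S \<subseteq> carrier H"
    and hom: "\<And>a b. a \<in> S \<Longrightarrow> b \<in> S \<Longrightarrow> a + b \<in> S \<Longrightarrow> \<phi> (a + b) = \<phi> a \<otimes>\<^bsub>H\<^esub> \<phi> b"
    using \<phi>S unfolding partial_hom_def by auto
  have "transplant H \<phi> M2 \<mu>2 d (h \<otimes>\<^bsub>H\<^esub> \<phi> m) = \<tau>2 c m" if m: "m \<in> M1" for m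
  proof -
    have hm: "h \<otimes>\<^bsub>H\<^esub> \<phi> m \<in> carrier H" using h \<phi> S(1) m by blast
    have "restr M2 (\<lambda>m'. d (h \<otimes>\<^bsub>H\<^esub> \<phi> m \<otimes>\<^bsub>H\<^esub> \<phi> m')) = restr M2 (\<lambda>m'. c (m + m'))"
    proof (rule restr_cong)
      fix m' assume m': "m' \<in> M2"
      have mS: "m \<in> S" "m' \<in> S" "m + m' \<in> S" using S m m' by blast+
      then have "\<phi> m \<in> carrier H" "\<phi> m' \<in> carrier H" using \<phi> by blast+
      then have "h \<otimes>\<^bsub>H\<^esub> \<phi> m \<otimes>\<^bsub>H\<^esub> \<phi> m' = h \<otimes>\<^bsub>H\<^esub> \<phi> (m + m')"
        using hom[OF mS] h by (simp add: H.m_assoc)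
      then show "d (h \<otimes>\<^bsub>H\<^esub> \<phi> m \<otimes>\<^bsub>H\<^esub> \<phi> m') = c (m + m')" using d S(3) m m' by simp
    qed
    then show ?thesis unfolding transplant_def using hm CA_apply[OF \<tau>2] by simp
  qed
  then have "restr M1 (\<lambda>m. transplant H \<phi> M2 \<mu>2 d (h \<otimes>\<^bsub>H\<^esub> \<phi> m)) = restr M1 (\<lambda>m. \<tau>2 c (0 + m))"
    by (auto intro: restr_cong)
  then show ?thesis unfolding transplant_def using h CA_apply[OF \<tau>1] by simp
qed

lemma transplant_left_inverse:
  fixes H :: "'k monoid" and \<phi> :: "'g::group_add \<Rightarrow> 'k"
  assumes H: "group H" and \<phi>S: "partial_hom H \<phi> S" and S0: "0 \<in> S"
    and S: "M1 \<subseteq> S" "M2 \<subseteq> S" "\<And>a b. a \<in> M1 \<Longrightarrow> b \<in> M2 \<Longrightarrow> a + b \<in> S"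
    and \<tau>1: "\<forall>c g. \<tau>1 c g = \<mu>1 (restr M1 (shift (- g) c))"
    and \<tau>2: "\<forall>c g. \<tau>2 c g = \<mu>2 (restr M2 (shift (- g) c))"
    and inv: "\<tau>1 \<circ> \<tau>2 = id" and d: "supported_in (carrier H) d"
  shows "transplant H \<phi> M1 \<mu>1 (transplant H \<phi> M2 \<mu>2 d) = d"
proof
  fix h
  show "transplant H \<phi> M1 \<mu>1 (transplant H \<phi> M2 \<mu>2 d) h = d h"
  proof (cases "h \<in> carrier H")
    case False
    then show ?thesis using d unfolding transplant_def supported_in_def by simp
  next
    case h: True
    define c where "c x = (if x \<in> S then d (h \<otimes>\<^bsub>H\<^esub> \<phi> x) else 0)" for x
    have "transplant H \<phi> M1 \<mu>1 (transplant H \<phi> M2 \<mu>2 d) h = \<tau>1 (\<tau>2 c) 0"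
    proof (rule transplant_comp[OF H h \<phi>S S \<tau>1 \<tau>2])
      fix x assume "x \<in> S"
      then show "d (h \<otimes>\<^bsub>H\<^esub> \<phi> x) = c x" by (simp add: c_def)
    qed
    also have "\<dots> = c 0" using inv by (simp add: fun_eq_iff)
    also have "\<dots> = d h"
      using S0 h partial_hom_zero[OF H \<phi>S S0] monoid.r_one[OF group.is_monoid[OF H]]
      by (simp add: c_def)
    finally show ?thesis .
  qed
qed

lemma transplant_right_inverse_imp_origin:
  fixes H :: "'k monoid" and \<phi> :: "'g::group_add \<Rightarrow> 'k"
  assumes H: "group H" and \<phi>S: "partial_hom H \<phi> S" and inj: "inj_on \<phi> S" and S0: "0 \<in> S"
    and S: "M1 \<subseteq> S" "M2 \<subseteq> S" "\<And>a b. a \<in> M1 \<Longrightarrow> b \<in> M2 \<Longrightarrow> a + b \<in> S"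
    and \<tau>1: "\<forall>c g. \<tau>1 c g = \<mu>1 (restr M1 (shift (- g) c))"
    and \<tau>2: "\<forall>c g. \<tau>2 c g = \<mu>2 (restr M2 (shift (- g) c))"
    and inv: "\<And>d. supported_in (carrier H) d \<Longrightarrow> transplant H \<phi> M1 \<mu>1 (transplant H \<phi> M2 \<mu>2 d) = d"
  shows "\<tau>1 (\<tau>2 c) 0 = c 0"
proof -
  interpret H: group H by (rule H)
  have \<phi>: "\<phi> ` S \<subseteq> carrier H" using \<phi>S unfolding partial_hom_def by blast
  define d where "d y = (if y \<in> \<phi> ` S then c (inv_into S \<phi> y) else 0)" for y
  have d_supp: "supported_in (carrier H) d" using \<phi> unfolding d_def supported_in_def by auto
  have d_\<phi>: "d (\<one>\<^bsub>H\<^esub> \<otimes>\<^bsub>H\<^esub> \<phi> x) = c x" if "x \<in> S" for x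
  proof -
    have "\<one>\<^bsub>H\<^esub> \<otimes>\<^bsub>H\<^esub> \<phi> x = \<phi> x" using that \<phi> by auto
    then show ?thesis using that inj unfolding d_def by simp
  qed
  have "c 0 = d \<one>\<^bsub>H\<^esub>" using d_\<phi>[OF S0] partial_hom_zero[OF H \<phi>S S0] by simp
  also have "\<dots> = transplant H \<phi> M1 \<mu>1 (transplant H \<phi> M2 \<mu>2 d) \<one>\<^bsub>H\<^esub>" using inv[OF d_supp] by simp
  also have "\<dots> = \<tau>1 (\<tau>2 c) 0"
    by (rule transplant_comp[where d = d and c = c, OF H H.one_closed \<phi>S S \<tau>1 \<tau>2 d_\<phi>])
  finally show ?thesis by simp
qed

lemma CA_Rmod_left_inverse_imp_right_inverse:
  fixes sm :: "'r::ring_1 \<Rightarrow> 'a::ab_group_add \<Rightarrow> 'a" and \<sigma> \<tau> :: "('g::group_add \<Rightarrow> 'a) \<Rightarrow> ('g \<Rightarrow> 'a)"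
  assumes lef: "LEF TYPE('g)" and sm: "rmodule sm" and \<sigma>: "CA_Rmod sm \<sigma>" and \<tau>: "CA_Rmod sm \<tau>"
    and \<sigma>\<tau>: "\<sigma> \<circ> \<tau> = id"
    and df: "\<And>K :: nat set. finite K \<Longrightarrow> directly_finite_on (smul_fun sm) {x. supported_in K x}"
  shows "\<tau> \<circ> \<sigma> = id"
proof -
  obtain Ms \<mu>s where Ms: "finite Ms" "\<forall>c g. \<sigma> c g = \<mu>s (restr Ms (shift (- g) c))"
    "\<forall>x y. supported_in Ms x \<longrightarrow> supported_in Ms y \<longrightarrow> \<mu>s (\<lambda>h. x h + y h) = \<mu>s x + \<mu>s y"
    "\<forall>r x. supported_in Ms x \<longrightarrow> \<mu>s (\<lambda>h. sm r (x h)) = sm r (\<mu>s x)"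
    using \<sigma> unfolding CA_Rmod_def by blast
  obtain Mt \<mu>t where Mt: "finite Mt" "\<forall>c g. \<tau> c g = \<mu>t (restr Mt (shift (- g) c))"
    "\<forall>x y. supported_in Mt x \<longrightarrow> supported_in Mt y \<longrightarrow> \<mu>t (\<lambda>h. x h + y h) = \<mu>t x + \<mu>t y"
    "\<forall>r x. supported_in Mt x \<longrightarrow> \<mu>t (\<lambda>h. sm r (x h)) = sm r (\<mu>t x)"
    using \<tau> unfolding CA_Rmod_def by blast
  define S where "S = insert 0 (Ms \<union> Mt \<union> (\<lambda>(a, b). a + b) ` (Ms \<times> Mt) \<union> (\<lambda>(a, b). a + b) ` (Mt \<times> Ms))"
  have S: "0 \<in> S" "Ms \<subseteq> S" "Mt \<subseteq> S" "\<And>a b. a \<in> Ms \<Longrightarrow> b \<in> Mt \<Longrightarrow> a + b \<in> S"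
    "\<And>a b. a \<in> Mt \<Longrightarrow> b \<in> Ms \<Longrightarrow> a + b \<in> S"
    unfolding S_def by force+
  have "finite S" unfolding S_def using Ms(1) Mt(1) by simp
  then obtain H :: "nat monoid" and \<phi> where H: "group H" "finite (carrier H)" "inj_on \<phi> S"
    and \<phi>: "\<phi> ` S \<subseteq> carrier H" "\<forall>a\<in>S. \<forall>b\<in>S. a + b \<in> S \<longrightarrow> \<phi> (a + b) = \<phi> a \<otimes>\<^bsub>H\<^esub> \<phi> b"
    using lef[unfolded LEF_def, rule_format, OF \<open>finite S\<close>] by blast
  have \<phi>S: "partial_hom H \<phi> S" unfolding partial_hom_def using \<phi> by blast
  have ST: "transplant H \<phi> Ms \<mu>s (transplant H \<phi> Mt \<mu>t d) = d" if "supported_in (carrier H) d" for d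
    by (rule transplant_left_inverse[OF H(1) \<phi>S S(1-4) Ms(2) Mt(2) \<sigma>\<tau> that])
  have TS: "transplant H \<phi> Mt \<mu>t (transplant H \<phi> Ms \<mu>s d) = d" if "supported_in (carrier H) d" for d
  proof (rule directly_finite_onD[OF df[OF H(2)] module_endo_transplant[OF sm Mt(3,4)]
        module_endo_transplant[OF sm Ms(3,4)]])
    show "transplant H \<phi> Mt \<mu>t ` {x. supported_in (carrier H) x} \<subseteq> {x. supported_in (carrier H) x}"
      "transplant H \<phi> Ms \<mu>s ` {x. supported_in (carrier H) x} \<subseteq> {x. supported_in (carrier H) x}"
      using transplant_supported by blast+
  qed (use ST that in simp_all)
  have "\<tau> (\<sigma> c) 0 = c 0" for c
    by (rule transplant_right_inverse_imp_origin[OF H(1) \<phi>S H(3) S(1,3,2,5) Mt(2) Ms(2) TS])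
  then show ?thesis by (rule CA_comp_eq_id_at_origin[OF Ms(2) Mt(2)])
qed

theorem corollary7p1:
  fixes smul :: "'r::ring_1 \<Rightarrow> 'a::ab_group_add \<Rightarrow> 'a"
    and \<sigma> \<tau> :: "('g::group_add \<Rightarrow> 'a) \<Rightarrow> ('g \<Rightarrow> 'a)"
  assumes "LEF TYPE('g)"
    and "rmodule smul"
    and "CA_Rmod smul \<sigma>"
    and "CA_Rmod smul \<tau>"
  shows "(noetherian_module smul \<and> reversible \<tau> \<longrightarrow> CA_Rmod smul (inv_into UNIV \<tau>))
    \<and> (\<sigma> \<circ> \<tau> = id \<and>
         (noetherian_module smul \<or> artinian_module smul \<or>
          ((\<forall>r s :: 'r. r * s = s * r) \<and> fin_gen_module smul))
       \<longrightarrow> \<tau> \<circ> \<sigma> = id)"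
proof (intro conjI impI)
  assume "noetherian_module smul \<and> reversible \<tau>"
  then show "CA_Rmod smul (inv_into UNIV \<tau>)" using CA_Rmod_inv_into[OF assms(2,4)] by blast
next
  assume h: "\<sigma> \<circ> \<tau> = id \<and> (noetherian_module smul \<or> artinian_module smul \<or>
    ((\<forall>r s :: 'r. r * s = s * r) \<and> fin_gen_module smul))"
  show "\<tau> \<circ> \<sigma> = id"
    by (rule CA_Rmod_left_inverse_imp_right_inverse[OF assms conjunct1[OF h]])
      (rule directly_finite_on_supported[OF assms(2) _ conjunct2[OF h]])
qed

end
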